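(* For every integer $n \geq 1$, $D_n = Der_n + (-1)^{n-1}$. Equivalently, $D_n = n!\sum_{k=0}^{n-1}\frac{(-1)^k}{k!}$.
   Context: A linear arrangement of $\{1,\ldots,n\}$ is a sequence $a_1\cdots a_n$ in which each of $1,\ldots,n$ appears exactly once. It contains the pattern $ij$ if $a_t=i$ and $a_{t+1}=j$ for some $t$; otherwise it avoids it. $D_n$ is the number of linear arrangements of $\{1,\ldots,n\}$ avoiding all of the patterns $12, 23, \ldots, (n-1)n, n1$. $Der_n = n!\sum_{k=0}^n \frac{(-1)^k}{k!}$ is the $n$-th derangement number, the number of permutations of $\{1,\ldots,n\}$ with no fixed point. *)

theory Defs
  imports Complex_Main
begin

definition linear_arrangement :: "nat \<Rightarrow> nat list \<Rightarrow> bool" where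
  "linear_arrangement n xs \<longleftrightarrow> distinct xs \<and> set xs = {1..n}"

definition contains_pattern :: "nat list \<Rightarrow> nat \<Rightarrow> nat \<Rightarrow> bool" where
  "contains_pattern xs i j \<longleftrightarrow> (\<exists>t. Suc t < length xs \<and> xs ! t = i \<and> xs ! Suc t = j)"

definition forbidden_patterns :: "nat \<Rightarrow> (nat \<times> nat) set" where
  "forbidden_patterns n = {(i, i + 1) | i. 1 \<le> i \<and> i \<le> n - 1} \<union> {(n, 1)}"

definition D :: "nat \<Rightarrow> nat" where
  "D n = card {xs. linear_arrangement n xs \<and>
                  (\<forall>(i, j) \<in> forbidden_patterns n. \<not> contains_pattern xs i j)}"

definition Der :: "nat \<Rightarrow> real" where
  "Der n = fact n * (\<Sum>k=0..n. (-1) ^ k / fact k)"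

end

theory Submission
  imports Defs "HOL-Combinatorics.Multiset_Permutations"
begin

text \<open>Let C be the set of the n cyclic successions (i, i+1) and (n, 1). Inclusion-exclusion over
  the successions S \<subseteq> C that are forced to occur gives D_n as the alternating sum of the numbers
  N(S) of arrangements containing all of S. If S \<noteq> C, the pairs of S glue 1..n into n - |S| blocks,
  so N(S) = (n - |S|)!; this is proved by induction on |S|, deleting the second entry of a forced
  pair. If S = C, then N(S) = 0, because an arrangement has only n - 1 adjacencies. Hence
  D_n = \<Sum>k (-1)^k (n choose k) (n-k)! - (-1)^n = Der_n + (-1)^(n-1).\<close>

fun adj_pairs :: "'a list \<Rightarrow> ('a \<times> 'a) set" where
  "adj_pairs (x # y # zs) = insert (x, y) (adj_pairs (y # zs))"
| "adj_pairs _ = {}"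

lemma adj_pairs_conv_zip: "adj_pairs xs = set (zip xs (tl xs))"
  by (induction xs rule: adj_pairs.induct) auto

lemma adj_pairs_conv_nth: "adj_pairs xs = {(xs ! t, xs ! Suc t) | t. Suc t < length xs}"
  unfolding adj_pairs_conv_zip set_zip by (auto simp: nth_tl)

lemma contains_pattern_iff_adj_pairs: "contains_pattern xs i j \<longleftrightarrow> (i, j) \<in> adj_pairs xs"
  unfolding contains_pattern_def adj_pairs_conv_nth by auto

lemma adj_pairs_in_set: "(x, y) \<in> adj_pairs xs \<Longrightarrow> x \<in> set xs \<and> y \<in> set xs"
  by (induction xs rule: adj_pairs.induct) auto

lemma finite_adj_pairs [simp]: "finite (adj_pairs xs)"
  unfolding adj_pairs_conv_zip by simp

lemma card_adj_pairs_le: "card (adj_pairs xs) \<le> length xs - 1"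
  unfolding adj_pairs_conv_zip using card_length[of "zip xs (tl xs)"] by simp

lemma adj_pairs_Cons_subset: "adj_pairs ys \<subseteq> adj_pairs (u # ys)"
  by (cases ys) auto

lemma adj_pairs_append:
  "xs \<noteq> [] \<Longrightarrow> ys \<noteq> [] \<Longrightarrow>
    adj_pairs (xs @ ys) = adj_pairs xs \<union> adj_pairs ys \<union> {(last xs, hd ys)}"
  by (induction xs rule: adj_pairs.induct) (auto simp: neq_Nil_conv)

lemma adj_pairs_upt: "adj_pairs [i..<j] = {(k, Suc k) | k. i \<le> k \<and> Suc k < j}"
proof (induction j)
  case (Suc j)
  then show ?case
    by (cases "i < j") (auto simp: adj_pairs_append less_Suc_eq_le)
qed simp

lemma adj_pairs_same_fst:
  assumes "distinct xs" "(x, y) \<in> adj_pairs xs" "(x, y') \<in> adj_pairs xs"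
  shows "y = y'"
proof -
  obtain t t' where "Suc t < length xs" "xs ! t = x" "xs ! Suc t = y"
     "Suc t' < length xs" "xs ! t' = x" "xs ! Suc t' = y'"
    using assms(2,3) unfolding adj_pairs_conv_nth by auto
  then show ?thesis using assms(1) nth_eq_iff_index_eq[of xs t t'] by auto
qed

lemma adj_pairs_same_snd:
  assumes "distinct xs" "(x, y) \<in> adj_pairs xs" "(x', y) \<in> adj_pairs xs"
  shows "x = x'"
proof -
  obtain t t' where "Suc t < length xs" "xs ! t = x" "xs ! Suc t = y"
     "Suc t' < length xs" "xs ! t' = x'" "xs ! Suc t' = y"
    using assms(2,3) unfolding adj_pairs_conv_nth by auto
  then show ?thesis using assms(1) nth_eq_iff_index_eq[of xs "Suc t" "Suc t'"] by auto
qed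

lemma adj_pairs_irrefl:
  assumes "distinct xs" "(x, y) \<in> adj_pairs xs"
  shows "x \<noteq> y"
proof -
  obtain t where "Suc t < length xs" "xs ! t = x" "xs ! Suc t = y"
    using assms(2) unfolding adj_pairs_conv_nth by auto
  then show ?thesis using assms(1) nth_eq_iff_index_eq[of xs t "Suc t"] by auto
qed

lemma adj_pairs_removeAll:
  "(x, y) \<in> adj_pairs xs \<Longrightarrow> x \<noteq> b \<Longrightarrow> y \<noteq> b \<Longrightarrow>
    (x, y) \<in> adj_pairs (removeAll b xs)"
proof (induction xs rule: adj_pairs.induct)
  case (1 u v zs)
  show ?case
  proof (cases "(x, y) = (u, v)")
    case True
    then show ?thesis using 1 by auto
  next
    case False
    then have "(x, y) \<in> adj_pairs (removeAll b (v # zs))" using 1 by auto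
    then show ?thesis using adj_pairs_Cons_subset[of "removeAll b (v # zs)" u] by auto
  qed
qed auto

lemma adj_pairs_removeAll_bridge:
  "distinct xs \<Longrightarrow> (a, b) \<in> adj_pairs xs \<Longrightarrow> (b, c) \<in> adj_pairs xs
   \<Longrightarrow> (a, c) \<in> adj_pairs (removeAll b xs)"
proof (induction xs rule: adj_pairs.induct)
  case (1 u v zs)
  show ?case
  proof (cases "(a, b) = (u, v)")
    case True
    then have "b \<notin> set zs" "(b, c) \<in> adj_pairs (b # zs)" "b \<noteq> c"
      using 1 adj_pairs_in_set adj_pairs_irrefl by fastforce+
    then obtain w where "zs = c # w"
      by (cases zs) (auto dest: adj_pairs_in_set)
    then show ?thesis using 1 True by auto
  next
    case False
    then have ab: "(a, b) \<in> adj_pairs (v # zs)" using 1 by auto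
    then have "u \<noteq> b" using 1 adj_pairs_in_set by fastforce
    then have "(a, c) \<in> adj_pairs (removeAll b (v # zs))" using 1 ab by auto
    then show ?thesis using adj_pairs_Cons_subset[of "removeAll b (v # zs)" u] \<open>u \<noteq> b\<close> by auto
  qed
qed auto

fun ins_after :: "'a \<Rightarrow> 'a \<Rightarrow> 'a list \<Rightarrow> 'a list" where
  "ins_after a b [] = []"
| "ins_after a b (x # xs) = (if x = a then a # b # ins_after a b xs else x # ins_after a b xs)"

lemma ins_after_absent: "a \<notin> set zs \<Longrightarrow> ins_after a b zs = zs"
  by (induction zs) auto

lemma set_ins_after: "set (ins_after a b zs) = set zs \<union> (if a \<in> set zs then {b} else {})"
  by (induction zs) auto

lemma distinct_ins_after: "distinct zs \<Longrightarrow> b \<notin> set zs \<Longrightarrow> distinct (ins_after a b zs)"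
  by (induction zs) (auto simp: set_ins_after ins_after_absent)

lemma removeAll_ins_after: "b \<notin> set zs \<Longrightarrow> removeAll b (ins_after a b zs) = zs"
  by (induction zs) auto

lemma ins_after_removeAll:
  "distinct xs \<Longrightarrow> (a, b) \<in> adj_pairs xs \<Longrightarrow> ins_after a b (removeAll b xs) = xs"
proof (induction xs rule: adj_pairs.induct)
  case (1 x y zs)
  show ?case
  proof (cases "(a, b) = (x, y)")
    case True
    then show ?thesis using 1 by (auto simp: ins_after_absent)
  next
    case False
    then have ab: "(a, b) \<in> adj_pairs (y # zs)" using 1 by auto
    then have "x \<noteq> a" "x \<noteq> b" using 1 adj_pairs_in_set by fastforce+
    then show ?thesis using 1 ab by auto
  qed
qed auto

lemma adj_pairs_ins_after_new: "a \<in> set zs \<Longrightarrow> (a, b) \<in> adj_pairs (ins_after a b zs)"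
proof (induction zs)
  case (Cons x zs)
  then show ?case by (cases zs) auto
qed auto

lemma adj_pairs_ins_after_shift:
  "(a, y) \<in> adj_pairs zs \<Longrightarrow> (b, y) \<in> adj_pairs (ins_after a b zs)"
proof (induction zs rule: adj_pairs.induct)
  case (1 u v zs)
  then show ?case by (cases zs) (auto split: if_splits)
qed auto

lemma adj_pairs_ins_after_keep:
  "(x, y) \<in> adj_pairs zs \<Longrightarrow> x \<noteq> a \<Longrightarrow> (x, y) \<in> adj_pairs (ins_after a b zs)"
proof (induction zs rule: adj_pairs.induct)
  case (1 u v zs)
  then show ?case by (cases zs) (auto split: if_splits)
qed auto

definition arrangements_containing :: "'a set \<Rightarrow> ('a \<times> 'a) set \<Rightarrow> 'a list set" where
  "arrangements_containing V Q = {xs. distinct xs \<and> set xs = V \<and> Q \<subseteq> adj_pairs xs}"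

text \<open>Deleting b from an arrangement in which b follows a turns an adjacency (b, c) into (a, c).\<close>

definition contract_pair :: "'a \<Rightarrow> 'a \<Rightarrow> 'a \<times> 'a \<Rightarrow> 'a \<times> 'a" where
  "contract_pair a b p = (if fst p = b then a else fst p, snd p)"

lemma inj_on_contract_pair:
  assumes "distinct ys" "Q \<subseteq> adj_pairs ys"
  shows "inj_on (contract_pair a b) Q"
proof (rule inj_onI)
  fix p q assume pq: "p \<in> Q" "q \<in> Q" "contract_pair a b p = contract_pair a b q"
  then have "snd p = snd q" by (simp add: contract_pair_def)
  moreover have "(fst p, snd p) \<in> adj_pairs ys" "(fst q, snd p) \<in> adj_pairs ys"
    using pq(1,2) assms(2) \<open>snd p = snd q\<close> by (metis prod.collapse subsetD)+
  ultimately show "p = q"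
    using adj_pairs_same_snd[OF assms(1)] by (simp add: prod_eq_iff)
qed

lemma contract_pairs_subset_removeAll:
  assumes "distinct xs" "Q \<subseteq> adj_pairs xs" "(a, b) \<in> Q"
  shows "contract_pair a b ` (Q - {(a, b)}) \<subseteq> adj_pairs (removeAll b xs)"
proof (rule image_subsetI)
  fix p assume "p \<in> Q - {(a, b)}"
  then obtain x y where p: "p = (x, y)" and xy: "(x, y) \<in> Q" "(x, y) \<noteq> (a, b)"
    by (cases p) auto
  then have "y \<noteq> b" using adj_pairs_same_snd[OF assms(1)] assms(2,3) by blast
  have "contract_pair a b (x, y) \<in> adj_pairs (removeAll b xs)"
  proof (cases "x = b")
    case True
    then show ?thesis
      using adj_pairs_removeAll_bridge[OF assms(1), of a b y] xy(1) assms(2,3)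
      by (auto simp: contract_pair_def)
  next
    case False
    then show ?thesis
      using adj_pairs_removeAll[of x y xs b] xy(1) assms(2) \<open>y \<noteq> b\<close>
      by (auto simp: contract_pair_def)
  qed
  then show "contract_pair a b p \<in> adj_pairs (removeAll b xs)" by (simp add: p)
qed

lemma subset_adj_pairs_ins_after:
  assumes "distinct ys" "Q \<subseteq> adj_pairs ys" "(a, b) \<in> Q"
    and "a \<in> set zs" "contract_pair a b ` (Q - {(a, b)}) \<subseteq> adj_pairs zs"
  shows "Q \<subseteq> adj_pairs (ins_after a b zs)"
proof
  fix p assume "p \<in> Q"
  then obtain x y where p: "p = (x, y)" and xy: "(x, y) \<in> Q" by (cases p) auto
  have "(x, y) \<in> adj_pairs (ins_after a b zs)"
  proof (cases "(x, y) = (a, b)")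
    case True
    then show ?thesis using adj_pairs_ins_after_new assms(4) by simp
  next
    case False
    then have "y \<noteq> b" using xy adj_pairs_same_snd[OF assms(1)] assms(2,3) by blast
    have contracted: "contract_pair a b (x, y) \<in> adj_pairs zs"
      using xy False assms(5) by blast
    show ?thesis
    proof (cases "x = b")
      case True
      then show ?thesis
        using contracted adj_pairs_ins_after_shift by (simp add: contract_pair_def)
    next
      case False
      have "x \<noteq> a" using xy adj_pairs_same_fst[OF assms(1)] assms(2,3) \<open>y \<noteq> b\<close> by blast
      then show ?thesis
        using False contracted adj_pairs_ins_after_keep by (simp add: contract_pair_def)
    qed
  qed
  then show "p \<in> adj_pairs (ins_after a b zs)" by (simp add: p)
qed

lemma bij_betw_removeAll_arrangements_containing:
  assumes "distinct ys" "set ys = V" "Q \<subseteq> adj_pairs ys" "(a, b) \<in> Q"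
  shows "bij_betw (removeAll b) (arrangements_containing V Q)
           (arrangements_containing (V - {b}) (contract_pair a b ` (Q - {(a, b)})))"
proof (rule bij_betw_byWitness[where f' = "ins_after a b"])
  let ?Q' = "contract_pair a b ` (Q - {(a, b)})"
  have "(a, b) \<in> adj_pairs ys" using assms(3,4) by blast
  then have ab: "a \<in> V" "b \<in> V" "a \<noteq> b"
    using assms(2) adj_pairs_in_set[of a b ys] adj_pairs_irrefl[OF assms(1)] by auto
  show "\<forall>xs\<in>arrangements_containing V Q. ins_after a b (removeAll b xs) = xs"
  proof
    fix xs assume "xs \<in> arrangements_containing V Q"
    then have "distinct xs" "(a, b) \<in> adj_pairs xs"
      using assms(4) unfolding arrangements_containing_def by auto
    then show "ins_after a b (removeAll b xs) = xs" by (rule ins_after_removeAll)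
  qed
  show "\<forall>zs\<in>arrangements_containing (V - {b}) ?Q'. removeAll b (ins_after a b zs) = zs"
  proof
    fix zs assume "zs \<in> arrangements_containing (V - {b}) ?Q'"
    then have "b \<notin> set zs" unfolding arrangements_containing_def by auto
    then show "removeAll b (ins_after a b zs) = zs" by (rule removeAll_ins_after)
  qed
  show "removeAll b ` arrangements_containing V Q \<subseteq> arrangements_containing (V - {b}) ?Q'"
  proof (rule image_subsetI)
    fix xs assume "xs \<in> arrangements_containing V Q"
    then have xs: "distinct xs" "set xs = V" "Q \<subseteq> adj_pairs xs"
      unfolding arrangements_containing_def by auto
    then show "removeAll b xs \<in> arrangements_containing (V - {b}) ?Q'"
      using contract_pairs_subset_removeAll[OF xs(1,3) assms(4)]
      unfolding arrangements_containing_def by (simp add: distinct_removeAll)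
  qed
  show "ins_after a b ` arrangements_containing (V - {b}) ?Q' \<subseteq> arrangements_containing V Q"
  proof (rule image_subsetI)
    fix zs assume "zs \<in> arrangements_containing (V - {b}) ?Q'"
    then have zs: "distinct zs" "set zs = V - {b}" "?Q' \<subseteq> adj_pairs zs"
      unfolding arrangements_containing_def by auto
    then have "b \<notin> set zs" "a \<in> set zs" using ab by auto
    moreover have "distinct (ins_after a b zs)" using distinct_ins_after zs(1) \<open>b \<notin> set zs\<close> .
    moreover have "set (ins_after a b zs) = V"
      using zs(2) ab \<open>a \<in> set zs\<close> by (auto simp: set_ins_after)
    moreover have "Q \<subseteq> adj_pairs (ins_after a b zs)"
      using subset_adj_pairs_ins_after[OF assms(1,3,4) \<open>a \<in> set zs\<close> zs(3)] .
    ultimately show "ins_after a b zs \<in> arrangements_containing V Q"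
      unfolding arrangements_containing_def by blast
  qed
qed

lemma card_arrangements_containing:
  assumes "distinct ys" "set ys = V" "Q \<subseteq> adj_pairs ys"
  shows "card (arrangements_containing V Q) = fact (card V - card Q)"
  using assms
proof (induction "card Q" arbitrary: Q V ys)
  case 0
  then have "Q = {}" using finite_subset[OF 0(4) finite_adj_pairs] by simp
  then have "arrangements_containing V Q = permutations_of_set V"
    by (auto simp: arrangements_containing_def permutations_of_set_def)
  then show ?case using 0 card_permutations_of_set[of V] by auto
next
  case (Suc k)
  then have "Q \<noteq> {}" by auto
  then obtain a b where ab: "(a, b) \<in> Q" by auto
  define Q' where "Q' = contract_pair a b ` (Q - {(a, b)})"
  have "card Q' = k"
    unfolding Q'_def using Suc.hyps(2) ab finite_subset[OF Suc.prems(3)]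
      inj_on_subset[OF inj_on_contract_pair[OF Suc.prems(1,3)]]
    by (simp add: card_image)
  moreover have "distinct (removeAll b ys)" "set (removeAll b ys) = V - {b}"
    using Suc.prems by (auto simp: distinct_removeAll)
  moreover have "Q' \<subseteq> adj_pairs (removeAll b ys)"
    unfolding Q'_def using contract_pairs_subset_removeAll[OF Suc.prems(1,3) ab] .
  ultimately have "card (arrangements_containing (V - {b}) Q') = fact (card (V - {b}) - k)"
    using Suc.hyps(1) by blast
  moreover have "card (V - {b}) - k = card V - card Q"
    using Suc.hyps(2) Suc.prems ab adj_pairs_in_set by fastforce
  ultimately show ?case
    using bij_betw_same_card[OF bij_betw_removeAll_arrangements_containing[OF Suc.prems ab]]
    by (simp add: Q'_def)
qed

lemma card_avoiding_inclusion_exclusion: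
  fixes A :: "'a \<Rightarrow> 'b set"
  assumes "finite F" "finite U"
  shows "int (card {x\<in>U. A x \<inter> F = {}})
           = (\<Sum>S\<in>Pow F. (-1) ^ card S * int (card {x\<in>U. S \<subseteq> A x}))"
  using assms
proof (induction F arbitrary: U rule: finite_induct)
  case empty
  then show ?case by simp
next
  case (insert e F)
  let ?f = "\<lambda>U S. (-1) ^ card S * int (card {x\<in>U. S \<subseteq> A x})"
  let ?U' = "{x\<in>U. e \<in> A x}"
  have "{x\<in>U. A x \<inter> insert e F = {}} = {x\<in>U. A x \<inter> F = {}} - {x\<in>?U'. A x \<inter> F = {}}"
    by auto
  then have "int (card {x\<in>U. A x \<inter> insert e F = {}})
      = int (card {x\<in>U. A x \<inter> F = {}}) - int (card {x\<in>?U'. A x \<inter> F = {}})"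
    using insert.prems by (simp add: card_Diff_subset card_mono of_nat_diff subset_iff)
  also have "\<dots> = (\<Sum>S\<in>Pow F. ?f U S) - (\<Sum>S\<in>Pow F. ?f ?U' S)"
    using insert.IH[of U] insert.IH[of ?U'] insert.prems by simp
  also have "(\<Sum>S\<in>Pow F. ?f ?U' S) = - (\<Sum>S\<in>Pow F. ?f U (insert e S))"
    unfolding sum_negf[symmetric]
  proof (rule sum.cong[OF refl])
    fix S assume "S \<in> Pow F"
    then have "card (insert e S) = Suc (card S)"
      using insert.hyps finite_subset by (metis PowD card_insert_disjoint subsetD)
    moreover have "{x\<in>U. insert e S \<subseteq> A x} = {x\<in>?U'. S \<subseteq> A x}" by auto
    ultimately show "?f ?U' S = - ?f U (insert e S)" by simp
  qed
  also have "(\<Sum>S\<in>Pow F. ?f U (insert e S)) = (\<Sum>S\<in>insert e ` Pow F. ?f U S)"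
    using insert.hyps by (subst sum.reindex) (auto simp: inj_on_def)
  also have "(\<Sum>S\<in>Pow F. ?f U S) - - \<dots> = (\<Sum>S\<in>Pow (insert e F). ?f U S)"
    unfolding Pow_insert using insert.hyps by (subst sum.union_disjoint) auto
  finally show ?case .
qed

lemma sum_Pow_by_card:
  fixes g :: "nat \<Rightarrow> 'b::comm_semiring_1"
  assumes "finite C"
  shows "(\<Sum>S\<in>Pow C. g (card S)) = (\<Sum>k=0..card C. of_nat (card C choose k) * g k)"
proof -
  have "(\<Sum>S\<in>Pow C. g (card S)) = (\<Sum>k=0..card C. \<Sum>S\<in>{S. S \<in> Pow C \<and> card S = k}. g (card S))"
    by (rule sum.group[symmetric]) (use assms card_mono in auto)
  also have "\<dots> = (\<Sum>k=0..card C. of_nat (card C choose k) * g k)"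
    using n_subsets[OF assms] by simp
  finally show ?thesis .
qed

lemma forbidden_patterns_conv_image: "forbidden_patterns n = insert (n, 1) ((\<lambda>i. (i, Suc i)) ` {1..<n})"
  unfolding forbidden_patterns_def by auto

lemma card_forbidden_patterns: "n \<ge> 1 \<Longrightarrow> card (forbidden_patterns n) = n"
  unfolding forbidden_patterns_conv_image by (subst card_insert_disjoint) (auto simp: card_image inj_on_def)

lemma arrangement_missing_one_forbidden_pattern:
  assumes "p \<in> forbidden_patterns n"
  obtains ys where "distinct ys" "set ys = {1..n}" "forbidden_patterns n - {p} \<subseteq> adj_pairs ys"
proof (cases "p = (n, 1)")
  case True
  have "adj_pairs [1..<Suc n] = {(k, Suc k) | k. 1 \<le> k \<and> Suc k < Suc n}"
    by (rule adj_pairs_upt)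
  then have "forbidden_patterns n - {p} \<subseteq> adj_pairs [1..<Suc n]"
    using True by (auto simp: forbidden_patterns_conv_image)
  moreover have "distinct [1..<Suc n]" "set [1..<Suc n] = {1..n}" by auto
  ultimately show ?thesis using that by blast
next
  case False
  then obtain m where m: "p = (m, Suc m)" "1 \<le> m" "m < n"
    using assms by (auto simp: forbidden_patterns_conv_image)
  let ?ys = "[Suc m..<Suc n] @ [1..<Suc m]"
  have "adj_pairs ?ys = {(k, Suc k) | k. Suc m \<le> k \<and> k < n} \<union> {(k, Suc k) | k. 1 \<le> k \<and> k < m}
      \<union> {(n, 1)}"
    using m by (simp add: adj_pairs_append adj_pairs_upt del: upt_Suc)
  then have "forbidden_patterns n - {p} \<subseteq> adj_pairs ?ys"
    using m by (auto simp: forbidden_patterns_conv_image)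
  moreover have "distinct ?ys" "set ?ys = {1..n}" using m by auto
  ultimately show ?thesis using that by blast
qed

lemma card_arrangements_containing_forbidden_patterns:
  assumes "n \<ge> 1" "S \<subseteq> forbidden_patterns n"
  shows "card (arrangements_containing {1..n} S) = (if S = forbidden_patterns n then 0 else fact (n - card S))"
proof (cases "S = forbidden_patterns n")
  case True
  have "\<not> S \<subseteq> adj_pairs xs" if "distinct xs" "set xs = {1..n}" for xs
  proof
    assume "S \<subseteq> adj_pairs xs"
    then have "n \<le> card (adj_pairs xs)"
      using True card_mono[OF finite_adj_pairs] card_forbidden_patterns[OF assms(1)] by metis
    also have "\<dots> \<le> length xs - 1" by (rule card_adj_pairs_le)
    also have "length xs = n" using distinct_card[OF that(1)] that(2) by simp
    finally show False using assms(1) by simp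
  qed
  then have "arrangements_containing {1..n} S = {}"
    unfolding arrangements_containing_def by blast
  then show ?thesis using True by simp
next
  case False
  then obtain p where "p \<in> forbidden_patterns n" "S \<subseteq> forbidden_patterns n - {p}"
    using assms(2) by blast
  moreover from this(1) obtain ys where
    "distinct ys" "set ys = {1..n}" "forbidden_patterns n - {p} \<subseteq> adj_pairs ys"
    by (rule arrangement_missing_one_forbidden_pattern)
  ultimately have "card (arrangements_containing {1..n} S) = fact (card {1..n} - card S)"
    by (intro card_arrangements_containing) auto
  then show ?thesis using False by simp
qed

lemma D_eq_card_avoiding:
  "D n = card {xs\<in>permutations_of_set {1..n}. adj_pairs xs \<inter> forbidden_patterns n = {}}"
  unfolding D_def linear_arrangement_def permutations_of_set_def contains_pattern_iff_adj_pairs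
  by (rule arg_cong[where f = card]) auto

lemma int_D_eq_binomial_sum:
  assumes "n \<ge> 1"
  shows "int (D n) = (\<Sum>k=0..n. int (n choose k) * ((-1) ^ k * fact (n - k))) - (-1) ^ n"
proof -
  let ?F = "forbidden_patterns n"
  have fin: "finite ?F" by (simp add: forbidden_patterns_conv_image)
  have "int (D n) = (\<Sum>S\<in>Pow ?F. (-1) ^ card S * int (card (arrangements_containing {1..n} S)))"
    unfolding D_eq_card_avoiding card_avoiding_inclusion_exclusion[OF fin finite_permutations_of_set]
    by (intro sum.cong refl)
      (simp add: permutations_of_set_def arrangements_containing_def conj_commute conj_left_commute)
  also have "\<dots> = (\<Sum>S\<in>Pow ?F. (-1) ^ card S * fact (n - card S) - (if S = ?F then (-1) ^ n else 0))"
  proof (rule sum.cong[OF refl])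
    fix S assume "S \<in> Pow ?F"
    then show "(-1) ^ card S * int (card (arrangements_containing {1..n} S))
        = (-1) ^ card S * fact (n - card S) - (if S = ?F then (-1) ^ n else 0)"
      using card_arrangements_containing_forbidden_patterns[OF assms, of S]
        card_forbidden_patterns[OF assms] by auto
  qed
  also have "\<dots> = (\<Sum>S\<in>Pow ?F. (-1) ^ card S * fact (n - card S)) - (-1) ^ n"
    using fin by (simp add: sum_subtractf)
  also have "(\<Sum>S\<in>Pow ?F. (-1) ^ card S * fact (n - card S))
      = (\<Sum>k=0..n. int (n choose k) * ((-1) ^ k * fact (n - k)))"
    using sum_Pow_by_card[OF fin, of "\<lambda>k. (-1) ^ k * fact (n - k)"] card_forbidden_patterns[OF assms]
    by simp
  finally show ?thesis .
qed

lemma Der_eq_binomial_sum: "Der n = (\<Sum>k=0..n. real (n choose k) * ((-1) ^ k * fact (n - k)))"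
  unfolding Der_def sum_distrib_left
proof (rule sum.cong[OF refl])
  fix k assume "k \<in> {0..n}"
  then have "real (n choose k) = fact n / (fact k * fact (n - k))" by (simp add: binomial_fact)
  then show "fact n * ((-1) ^ k / fact k) = real (n choose k) * ((-1) ^ k * fact (n - k))"
    by (simp add: field_simps)
qed

theorem proposition2p4:
  fixes n :: nat
  assumes "n \<ge> 1"
  shows "real (D n) = Der n + (-1) ^ (n - 1)"
proof -
  have "real (D n) = real_of_int (int (D n))" by simp
  also have "\<dots> = Der n - (-1) ^ n"
    unfolding int_D_eq_binomial_sum[OF assms] Der_eq_binomial_sum by simp
  also have "(-1 :: real) ^ n = - ((-1) ^ (n - 1))"
    using assms by (cases n) auto
  finally show ?thesis by simp
qed

end
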